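(* Let $P$ be a priority forest on $[n]_0$ with $m$ edges, and let $C$ be a maximal chain of $[\hat0,P]$ with Jordan–Hölder permutation $\lambda(C)$. Then $F_C(P)$, the ordered forest obtained from $P$ by relabeling each non-root vertex $v$ by $\lambda(C)^{-1}(v)$ and marking the root of the $k$-th component tree by $\circ_k$ (with $\circ_0=\circ$), is the unique ordered forest with priority traversal $\lambda(C)^{-1}$ and priority forest $P$.
   Context: $[n]=\{1,\dots,n\}$, $[n]_0=\{0,\dots,n\}$. A priority forest on $[n]_0$ is a rooted forest with vertex set $[n]_0$ whose component trees $T_0,T_1,\dots$ are increasing (each non-root vertex has a larger label than its parent) and satisfy: for $j<k$ every label of $T_j$ is smaller than every label of $T_k$. $\Pi(n)$ is the poset of priority forests on $[n]_0$ ordered by inclusion of edge sets, with an extra top element; $\hat0$ is the edgeless forest. For priority forests $Q\lessdot Q'$ (one edge added), $\lambda(Q,Q')$ is the larger endpoint of the edge in $E(Q')\setminus E(Q)$. A maximal chain $C:\hat0=P_0\lessdot\cdots\lessdot P_m=P$ has Jordan–Hölder permutation $\lambda(C):[m]\to[n]$, $i\mapsto\lambda(P_{i-1},P_i)$, which is injective; $\lambda(C)^{-1}:[n]\to[m]$ is the partial permutation defined on its image. An ordered $(m,n)$-forest is a rooted forest with $n+1$ nodes and $m$ edges whose component trees $T_0,\dots,T_{n-m}$ are totally ordered, with unlabeled roots marked $\circ,\circ_1,\dots,\circ_{n-m}$, and non-root vertices labeled bijectively by $[m]$. Priority search: initially only the children of $\circ$ are unblocked; at each step visit the unblocked unvisited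 node with the smallest label and unblock its children; when a tree is exhausted, move to the next tree, visit its root and unblock its children. Steps are numbered $1,\dots,n$ (the visit of $\circ$ is not counted). The priority traversal is the partial permutation $[n]\to[m]$ sending step $i$ to the label of the node visited at step $i$, undefined when that node is a root. The priority forest is obtained by relabeling each node by its visiting step, with $\circ$ labeled $0$. *)

theory Defs
  imports Main
begin

definition is_root :: "(nat \<times> nat) set \<Rightarrow> nat \<Rightarrow> bool" where
  "is_root E v \<longleftrightarrow> (\<forall>u. (u, v) \<notin> E)"

definition priority_forest :: "nat \<Rightarrow> (nat \<times> nat) set \<Rightarrow> bool" where
  "priority_forest n E \<longleftrightarrow>
     E \<subseteq> {0..n} \<times> {0..n}
   \<and> (\<forall>(u, v) \<in> E. u < v)
   \<and> (\<forall>u u' v. (u, v) \<in> E \<longrightarrow> (u', v) \<in> E \<longrightarrow> u = u')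
   \<and> (\<forall>r r' x y. r \<in> {0..n} \<longrightarrow> r' \<in> {0..n} \<longrightarrow> is_root E r \<longrightarrow> is_root E r'
        \<longrightarrow> r < r' \<longrightarrow> (r, x) \<in> E\<^sup>* \<longrightarrow> (r', y) \<in> E\<^sup>* \<longrightarrow> x < y)"

definition max_chain :: "nat \<Rightarrow> (nat \<times> nat) set \<Rightarrow> (nat \<times> nat) set list \<Rightarrow> bool" where
  "max_chain n E Ps \<longleftrightarrow>
     Ps \<noteq> [] \<and> Ps ! 0 = {} \<and> last Ps = E
   \<and> (\<forall>i < length Ps. priority_forest n (Ps ! i))
   \<and> (\<forall>i. Suc i < length Ps \<longrightarrow> Ps ! i \<subseteq> Ps ! Suc i \<and> card (Ps ! Suc i - Ps ! i) = 1)"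

definition jh :: "(nat \<times> nat) set list \<Rightarrow> nat \<Rightarrow> nat" where
  "jh Ps i = (let e = the_elem (Ps ! i - Ps ! (i - 1)) in max (fst e) (snd e))"

definition jh_inv :: "nat \<Rightarrow> (nat \<times> nat) set list \<Rightarrow> nat \<Rightarrow> nat option" where
  "jh_inv n Ps v =
     (if v \<in> {1..n} \<and> (\<exists>i \<in> {1..length Ps - 1}. jh Ps i = v)
      then Some (THE i. i \<in> {1..length Ps - 1} \<and> jh Ps i = v) else None)"

datatype onode = Root nat | Lab nat

definition onodes :: "nat \<Rightarrow> nat \<Rightarrow> onode set" where
  "onodes m n = Root ` {0..n - m} \<union> Lab ` {1..m}"

text \<open>Edge set of pairs (parent, child); Root k is the marked root of the k-th tree.\<close>

definition ordered_forest :: "nat \<Rightarrow> nat \<Rightarrow> (onode \<times> onode) set \<Rightarrow> bool" where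
  "ordered_forest m n F \<longleftrightarrow>
     m \<le> n
   \<and> F \<subseteq> onodes m n \<times> onodes m n
   \<and> (\<forall>(p, c) \<in> F. \<exists>j. c = Lab j)
   \<and> (\<forall>j \<in> {1..m}. \<exists>!p. (p, Lab j) \<in> F)
   \<and> (\<forall>j \<in> {1..m}. \<exists>k. (Root k, Lab j) \<in> F\<^sup>+)"

definition ochildren :: "(onode \<times> onode) set \<Rightarrow> onode \<Rightarrow> nat set" where
  "ochildren F x = {j. (x, Lab j) \<in> F}"

text \<open>Priority search; state = (index of current tree, unblocked unvisited labels, last visited node).\<close>

fun ps_step :: "(onode \<times> onode) set \<Rightarrow> nat \<times> nat set \<times> onode \<Rightarrow> nat \<times> nat set \<times> onode" where
  "ps_step F (k, U, _) =
     (if U \<noteq> {} then (let j = Min U in (k, (U - {j}) \<union> ochildren F (Lab j), Lab j))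
      else (Suc k, ochildren F (Root (Suc k)), Root (Suc k)))"

definition ps_visit :: "(onode \<times> onode) set \<Rightarrow> nat \<Rightarrow> onode" where
  "ps_visit F i = snd (snd ((ps_step F ^^ i) (0, ochildren F (Root 0), Root 0)))"

definition prio_trav :: "nat \<Rightarrow> (onode \<times> onode) set \<Rightarrow> nat \<Rightarrow> nat option" where
  "prio_trav n F i =
     (if i \<in> {1..n} then (case ps_visit F i of Lab j \<Rightarrow> Some j | Root _ \<Rightarrow> None) else None)"

definition visit_step :: "nat \<Rightarrow> (onode \<times> onode) set \<Rightarrow> onode \<Rightarrow> nat" where
  "visit_step n F x = (THE i. i \<le> n \<and> ps_visit F i = x)"

definition prio_forest_of :: "nat \<Rightarrow> (onode \<times> onode) set \<Rightarrow> (nat \<times> nat) set" where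
  "prio_forest_of n F = {(visit_step n F p, visit_step n F c) | p c. (p, c) \<in> F}"

definition root_index :: "nat \<Rightarrow> (nat \<times> nat) set \<Rightarrow> nat \<Rightarrow> nat" where
  "root_index n E r = card {r'. r' \<le> n \<and> is_root E r' \<and> r' < r}"

definition FC_relabel :: "nat \<Rightarrow> (nat \<times> nat) set \<Rightarrow> (nat \<times> nat) set list \<Rightarrow> nat \<Rightarrow> onode" where
  "FC_relabel n E Ps v =
     (if is_root E v then Root (root_index n E v) else Lab (the (jh_inv n Ps v)))"

definition FC :: "nat \<Rightarrow> (nat \<times> nat) set \<Rightarrow> (nat \<times> nat) set list \<Rightarrow> (onode \<times> onode) set" where
  "FC n E Ps = {(FC_relabel n E Ps p, FC_relabel n E Ps c) | p c. (p, c) \<in> E}"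

end

theory Submission
  imports Defs
begin

text \<open>
  Relabelling P by the inverse Jordan-Hoelder permutation makes the priority search on F_C(P)
  visit vertex i of P at step i. Inductively, after the steps 0, ..., i the unblocked labels
  are those of the children v > i of the vertices \<le> i. If i + 1 is not a root, it is among
  them and carries the smallest label: an edge (p, v) with p < i + 1 < v enters the chain only
  after i + 1 has received its parent, since otherwise i + 1 would be a root of an intermediate
  priority forest lying between the vertices p and v of an earlier tree. If i + 1 is a root,
  nothing is pending and the search moves on to the next tree, whose marked root is the
  relabelled i + 1. Hence the traversal of F_C(P) is the inverse permutation and its priority
  forest is P. For uniqueness, the traversal of any F determines the node visited at every
  step, hence the step at which each node is visited, and then the priority forest of F
  determines its edges.
\<close>

section \<open>Priority forests\<close>

lemma rtrancl_increasing_le: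
  assumes "\<forall>(u, v) \<in> Q. u < (v::nat)" and "(a, b) \<in> Q\<^sup>*"
  shows "a \<le> b"
  using assms(2) by (induction rule: rtrancl_induct) (use assms(1) in fastforce)+

lemma increasing_obtain_root:
  assumes "\<forall>(u, v) \<in> Q. u < (v::nat)"
  obtains r where "is_root Q r" and "(r, x) \<in> Q\<^sup>*"
proof (induction x arbitrary: thesis rule: less_induct)
  case (less x)
  show ?case
  proof (cases "is_root Q x")
    case False
    then obtain u where u: "(u, x) \<in> Q" unfolding is_root_def by blast
    with assms have "u < x" by blast
    with less.IH obtain r where "is_root Q r" "(r, u) \<in> Q\<^sup>*" by blast
    with u show ?thesis using less.prems by (meson rtrancl.rtrancl_into_rtrancl)
  qed (use less.prems in blast)
qed

lemma priority_forest_increasing: "priority_forest n Q \<Longrightarrow> \<forall>(u, v) \<in> Q. u < v"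
  unfolding priority_forest_def by blast

lemma priority_forest_trees_ordered:
  assumes "priority_forest n Q" "r \<le> n" "r' \<le> n" "is_root Q r" "is_root Q r'" "r < r'"
    "(r, x) \<in> Q\<^sup>*" "(r', y) \<in> Q\<^sup>*"
  shows "x < y"
proof -
  have "\<forall>r r' x y. r \<in> {0..n} \<longrightarrow> r' \<in> {0..n} \<longrightarrow> is_root Q r \<longrightarrow> is_root Q r'
      \<longrightarrow> r < r' \<longrightarrow> (r, x) \<in> Q\<^sup>* \<longrightarrow> (r', y) \<in> Q\<^sup>* \<longrightarrow> x < y"
    using assms(1) unfolding priority_forest_def by (elim conjE)
  moreover have "r \<in> {0..n}" "r' \<in> {0..n}" using assms(2,3) by simp_all
  ultimately show ?thesis using assms(4-) by blast
qed

lemma priority_forest_child_less_root: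
  assumes "priority_forest n Q" "is_root Q i" "i \<le> n" "(p, v) \<in> Q" "p < i"
  shows "v < i"
proof -
  note increasing = priority_forest_increasing[OF assms(1)]
  obtain r where r: "is_root Q r" "(r, p) \<in> Q\<^sup>*" using increasing_obtain_root[OF increasing] .
  have "r \<le> p" using rtrancl_increasing_le[OF increasing r(2)] .
  moreover have "(r, v) \<in> Q\<^sup>*" using r(2) assms(4) by (meson rtrancl.rtrancl_into_rtrancl)
  ultimately show ?thesis using priority_forest_trees_ordered[OF assms(1), of r i v i] r(1) assms(2-5) by simp
qed

section \<open>Priority search\<close>

abbreviation ps_init :: "(onode \<times> onode) set \<Rightarrow> nat \<times> nat set \<times> onode" where
  "ps_init F \<equiv> (0, ochildren F (Root 0), Root 0)"

lemma ps_tree_index_counts_roots: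
  "fst ((ps_step F ^^ i) (ps_init F)) = card {j \<in> {1..i}. ps_visit F j \<in> range Root}
   \<and> (ps_visit F i \<in> range Root \<longrightarrow> ps_visit F i = Root (fst ((ps_step F ^^ i) (ps_init F))))"
proof (induction i)
  case 0 then show ?case by (simp add: ps_visit_def)
next
  case (Suc i)
  obtain k U x where st: "(ps_step F ^^ i) (ps_init F) = (k, U, x)" by (metis prod.collapse)
  have k: "k = card {j \<in> {1..i}. ps_visit F j \<in> range Root}" using Suc st by simp
  have roots_Suc: "{j \<in> {1..Suc i}. ps_visit F j \<in> range Root}
      = {j \<in> {1..i}. ps_visit F j \<in> range Root} \<union> {j. j = Suc i \<and> ps_visit F (Suc i) \<in> range Root}"
    by (auto simp: le_Suc_eq)
  have fin: "finite {j \<in> {1..i}. ps_visit F j \<in> range Root}" by simp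
  show ?case
  proof (cases "U = {}")
    case True
    then have st': "(ps_step F ^^ Suc i) (ps_init F) = (Suc k, ochildren F (Root (Suc k)), Root (Suc k))"
      using st by simp
    then have "ps_visit F (Suc i) = Root (Suc k)" by (simp add: ps_visit_def)
    then show ?thesis using st' k roots_Suc fin by simp
  next
    case False
    then have st': "(ps_step F ^^ Suc i) (ps_init F) = (k, (U - {Min U}) \<union> ochildren F (Lab (Min U)), Lab (Min U))"
      using st by (simp add: Let_def)
    then have "ps_visit F (Suc i) = Lab (Min U)" by (simp add: ps_visit_def)
    then show ?thesis using st' k roots_Suc by (simp add: image_iff)
  qed
qed

lemma ps_visit_Root_eq_card:
  "ps_visit F i = Root k \<Longrightarrow> k = card {j \<in> {1..i}. ps_visit F j \<in> range Root}"
  using ps_tree_index_counts_roots[where F = F and i = i] by auto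

lemma prio_trav_None_iff:
  "j \<in> {1..n} \<Longrightarrow> prio_trav n F j = None \<longleftrightarrow> ps_visit F j \<in> range Root"
  unfolding prio_trav_def by (cases "ps_visit F j") auto

text \<open>The traversal records a root visit only as undefined, but the index of the root is
  the number of root visits so far.\<close>

lemma ps_visit_eq_if_prio_trav_eq:
  assumes trav: "prio_trav n F = prio_trav n G" and "i \<le> n"
  shows "ps_visit F i = ps_visit G i"
proof (cases "i = 0")
  case True then show ?thesis by (simp add: ps_visit_def)
next
  case False
  then have i: "i \<in> {1..n}" using assms(2) by simp
  have same_roots: "{j \<in> {1..i}. ps_visit F j \<in> range Root} = {j \<in> {1..i}. ps_visit G j \<in> range Root}"
  proof -
    have "ps_visit F j \<in> range Root \<longleftrightarrow> ps_visit G j \<in> range Root" if "j \<in> {1..i}" for j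
    proof -
      have "j \<in> {1..n}" using that i by simp
      then show ?thesis using trav prio_trav_None_iff[of j n F] prio_trav_None_iff[of j n G] by simp
    qed
    then show ?thesis by blast
  qed
  show ?thesis
  proof (cases "ps_visit F i")
    case (Root k)
    then have "prio_trav n F i = None" using i by (simp add: prio_trav_def)
    then have "prio_trav n G i = None" using trav by simp
    then have "ps_visit G i \<in> range Root" using i prio_trav_None_iff by blast
    then obtain k' where k': "ps_visit G i = Root k'" by blast
    have "k = k'" using ps_visit_Root_eq_card[OF Root] ps_visit_Root_eq_card[OF k'] same_roots by simp
    then show ?thesis using Root k' by simp
  next
    case (Lab j)
    then have "prio_trav n F i = Some j" using i by (simp add: prio_trav_def)
    then have "prio_trav n G i = Some j" using trav by simp
    then show ?thesis using Lab i unfolding prio_trav_def by (cases "ps_visit G i") auto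
  qed
qed

lemma visit_step_eq_if_prio_trav_eq:
  assumes "prio_trav n F = prio_trav n G"
  shows "visit_step n F = visit_step n G"
proof
  fix x
  have "(\<lambda>i. i \<le> n \<and> ps_visit F i = x) = (\<lambda>i. i \<le> n \<and> ps_visit G i = x)"
    using ps_visit_eq_if_prio_trav_eq[OF assms] by auto
  then show "visit_step n F x = visit_step n G x" unfolding visit_step_def by simp
qed

section \<open>A maximal chain of a priority forest\<close>

locale priority_chain =
  fixes n m :: nat and E :: "(nat \<times> nat) set" and Ps :: "(nat \<times> nat) set list"
  assumes priority_forest: "priority_forest n E"
    and card_E: "card E = m"
    and max_chain: "max_chain n E Ps"
begin

lemma E_subset: "E \<subseteq> {0..n} \<times> {0..n}"
  using priority_forest unfolding priority_forest_def by blast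

lemma E_increasing: "\<forall>(u, v) \<in> E. u < v"
  using priority_forest by (rule priority_forest_increasing)

lemma E_less: "(u, v) \<in> E \<Longrightarrow> u < v"
  using E_increasing by blast

lemma E_parent_unique: "(u, v) \<in> E \<Longrightarrow> (u', v) \<in> E \<Longrightarrow> u = u'"
  using priority_forest unfolding priority_forest_def by blast

lemma finite_E: "finite E"
  using E_subset finite_subset by blast

lemma is_root_iff: "is_root E v \<longleftrightarrow> v \<notin> snd ` E"
  unfolding is_root_def by force

lemma is_root_0: "is_root E 0"
  unfolding is_root_def using E_less by blast

lemma Ps_nonempty: "Ps \<noteq> []"
  using max_chain unfolding max_chain_def by blast

lemma Ps_last: "Ps ! (length Ps - 1) = E"
  using max_chain Ps_nonempty unfolding max_chain_def by (simp add: last_conv_nth)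

lemma priority_forest_Ps: "i < length Ps \<Longrightarrow> priority_forest n (Ps ! i)"
  using max_chain unfolding max_chain_def by blast

definition added_edge :: "nat \<Rightarrow> nat \<times> nat" where
  "added_edge i = the_elem (Ps ! i - Ps ! (i - 1))"

lemma Ps_Suc:
  assumes "Suc i < length Ps"
  shows "Ps ! Suc i = insert (added_edge (Suc i)) (Ps ! i)" and "added_edge (Suc i) \<notin> Ps ! i"
proof -
  have "Ps ! i \<subseteq> Ps ! Suc i" and "card (Ps ! Suc i - Ps ! i) = 1"
    using max_chain assms unfolding max_chain_def by blast+
  moreover from this(2) obtain x where "Ps ! Suc i - Ps ! i = {x}" by (meson card_1_singletonE)
  ultimately show "Ps ! Suc i = insert (added_edge (Suc i)) (Ps ! i)" "added_edge (Suc i) \<notin> Ps ! i"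
    unfolding added_edge_def by auto
qed

lemma Ps_nth_eq: "j < length Ps \<Longrightarrow> Ps ! j = added_edge ` {1..j}"
proof (induction j)
  case 0
  then show ?case using max_chain unfolding max_chain_def by simp
next
  case (Suc j)
  then show ?case by (simp add: Ps_Suc(1) atLeastAtMostSuc_conv)
qed

lemma inj_on_added_edge: "inj_on added_edge {1..<length Ps}"
proof -
  have "added_edge i \<noteq> added_edge j" if "i \<in> {1..<length Ps}" "j \<in> {1..<length Ps}" "i < j" for i j
  proof -
    have "added_edge i \<in> Ps ! (j - 1)" using that Ps_nth_eq[of "j - 1"] by auto
    moreover have "added_edge j \<notin> Ps ! (j - 1)" using that Ps_Suc(2)[of "j - 1"] by simp
    ultimately show ?thesis by metis
  qed
  then show ?thesis by (metis inj_onI linorder_neqE_nat)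
qed

lemma length_Ps: "length Ps = Suc m"
proof -
  have "E = added_edge ` {1..length Ps - 1}"
    using Ps_nth_eq[of "length Ps - 1"] Ps_last Ps_nonempty by simp
  moreover have "inj_on added_edge {1..length Ps - 1}"
    using inj_on_added_edge by (rule inj_on_subset) auto
  ultimately have "card E = length Ps - 1" by (simp add: card_image)
  then show ?thesis using card_E Ps_nonempty by (cases Ps) auto
qed

lemma E_eq_image_added_edge: "E = added_edge ` {1..m}"
  using Ps_nth_eq[of m] Ps_last length_Ps by simp

lemma inj_on_added_edge_atLeastAtMost: "inj_on added_edge {1..m}"
  using inj_on_added_edge length_Ps by (simp add: atLeastLessThanSuc_atLeastAtMost)

lemma Ps_subset_E: "j < length Ps \<Longrightarrow> Ps ! j \<subseteq> E"
  using Ps_nth_eq length_Ps E_eq_image_added_edge by (simp add: image_mono)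

lemma added_edge_in_Ps_iff:
  assumes "i \<in> {1..m}" "j < length Ps"
  shows "added_edge i \<in> Ps ! j \<longleftrightarrow> i \<le> j"
proof -
  have "{1..j} \<subseteq> {1..m}" using assms(2) length_Ps by auto
  then have "added_edge i \<in> added_edge ` {1..j} \<longleftrightarrow> i \<in> {1..j}"
    using inj_on_image_mem_iff[OF inj_on_added_edge_atLeastAtMost assms(1)] by blast
  then show ?thesis using Ps_nth_eq[OF assms(2)] assms(1) by simp
qed

lemma jh_eq_child: "i \<in> {1..m} \<Longrightarrow> jh Ps i = snd (added_edge i)"
proof -
  assume "i \<in> {1..m}"
  then have "added_edge i \<in> E" using E_eq_image_added_edge by blast
  then have "fst (added_edge i) < snd (added_edge i)" using E_less by (metis prod.collapse)
  then show ?thesis unfolding jh_def added_edge_def[symmetric] Let_def by simp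
qed

lemma bij_betw_jh: "bij_betw (jh Ps) {1..m} (snd ` E)"
proof (rule bij_betw_imageI)
  show "inj_on (jh Ps) {1..m}"
  proof (rule inj_onI)
    fix i j assume ij: "i \<in> {1..m}" "j \<in> {1..m}" "jh Ps i = jh Ps j"
    have "added_edge i \<in> E" "added_edge j \<in> E" using ij E_eq_image_added_edge by auto
    moreover have "snd (added_edge i) = snd (added_edge j)" using ij jh_eq_child by simp
    ultimately have "added_edge i = added_edge j" using E_parent_unique by (metis prod.collapse)
    then show "i = j" using inj_on_added_edge_atLeastAtMost ij by (meson inj_onD)
  qed
  have "jh Ps ` {1..m} = (\<lambda>i. snd (added_edge i)) ` {1..m}"
    by (rule image_cong) (simp_all add: jh_eq_child)
  then show "jh Ps ` {1..m} = snd ` E" by (simp add: E_eq_image_added_edge image_image)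
qed

definition lam_inv :: "nat \<Rightarrow> nat" where
  "lam_inv v = the (jh_inv n Ps v)"

lemma children_in_range: "v \<in> snd ` E \<Longrightarrow> v \<in> {1..n}"
  using E_subset E_less by fastforce

lemma jh_inv_root: "v \<notin> snd ` E \<Longrightarrow> jh_inv n Ps v = None"
  unfolding jh_inv_def using bij_betw_jh length_Ps by (auto simp: bij_betw_def)

lemma jh_inv_child:
  assumes "v \<in> snd ` E"
  shows "jh_inv n Ps v = Some (lam_inv v)" and "lam_inv v \<in> {1..m}" and "jh Ps (lam_inv v) = v"
proof -
  have "v \<in> jh Ps ` {1..m}" using assms bij_betw_jh by (simp add: bij_betw_def)
  then obtain i where i: "i \<in> {1..m}" "jh Ps i = v" by blast
  have "(THE i. i \<in> {1..length Ps - 1} \<and> jh Ps i = v) = i"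
    using i bij_betw_jh length_Ps by (intro the_equality) (auto simp: bij_betw_def dest: inj_onD)
  then have "jh_inv n Ps v = Some i"
    unfolding jh_inv_def using i children_in_range[OF assms] length_Ps by auto
  then show "jh_inv n Ps v = Some (lam_inv v)" "lam_inv v \<in> {1..m}" "jh Ps (lam_inv v) = v"
    using i unfolding lam_inv_def by auto
qed

lemma bij_betw_lam_inv: "bij_betw lam_inv (snd ` E) {1..m}"
proof (rule bij_betw_byWitness[where f' = "jh Ps"])
  have jh_range: "jh Ps i \<in> snd ` E" if "i \<in> {1..m}" for i
    using that bij_betw_jh by (auto simp: bij_betw_def)
  show "\<forall>i \<in> {1..m}. lam_inv (jh Ps i) = i"
  proof
    fix i assume i: "i \<in> {1..m}"
    have "jh Ps (lam_inv (jh Ps i)) = jh Ps i" "lam_inv (jh Ps i) \<in> {1..m}"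
      using jh_inv_child[OF jh_range[OF i]] by simp_all
    then show "lam_inv (jh Ps i) = i" using inj_onD[OF bij_betw_imp_inj_on[OF bij_betw_jh]] i by blast
  qed
  show "jh Ps ` {1..m} \<subseteq> snd ` E" using jh_range by blast
  show "\<forall>v \<in> snd ` E. jh Ps (lam_inv v) = v" "lam_inv ` snd ` E \<subseteq> {1..m}"
    using jh_inv_child(2,3) by blast+
qed

lemma added_edge_lam_inv: "(p, v) \<in> E \<Longrightarrow> added_edge (lam_inv v) = (p, v)"
proof -
  assume pv: "(p, v) \<in> E"
  then have v: "v \<in> snd ` E" by force
  have "added_edge (lam_inv v) \<in> E" using jh_inv_child(2)[OF v] E_eq_image_added_edge by blast
  moreover have "snd (added_edge (lam_inv v)) = v" using jh_inv_child[OF v] jh_eq_child by simp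
  ultimately show ?thesis using pv E_parent_unique by (metis prod.collapse)
qed

text \<open>If i got its parent after v did, then i is still a root of the intermediate forest
  containing (p, v); as the tree of p starts below i, its priority condition forces v < i.\<close>

lemma lam_inv_less:
  assumes pv: "(p, v) \<in> E" and qi: "(q, i) \<in> E" and "p < i" "i < v"
  shows "lam_inv i < lam_inv v"
proof (rule ccontr)
  have children: "i \<in> snd ` E" "v \<in> snd ` E" using pv qi by force+
  then have lam_inv_range: "lam_inv v \<in> {1..m}" "lam_inv i \<in> {1..m}" using jh_inv_child(2) by auto
  assume "\<not> lam_inv i < lam_inv v"
  moreover have "lam_inv i \<noteq> lam_inv v"
    using bij_betw_imp_inj_on[OF bij_betw_lam_inv] children \<open>i < v\<close> by (auto dest: inj_onD)
  ultimately have later: "lam_inv v < lam_inv i" by simp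
  define Q where "Q = Ps ! lam_inv v"
  have in_Ps: "lam_inv v < length Ps" using lam_inv_range length_Ps by simp
  have "added_edge (lam_inv v) \<in> Q"
    unfolding Q_def using added_edge_in_Ps_iff[OF lam_inv_range(1) in_Ps] by simp
  then have "(p, v) \<in> Q" using added_edge_lam_inv[OF pv] by simp
  have "is_root Q i"
    unfolding is_root_def
  proof (intro allI notI)
    fix u assume ui: "(u, i) \<in> Q"
    then have "u = q" using Ps_subset_E[OF in_Ps] qi E_parent_unique unfolding Q_def by blast
    then have "added_edge (lam_inv i) \<in> Q" using added_edge_lam_inv[OF qi] ui by simp
    then show False
      unfolding Q_def using added_edge_in_Ps_iff[OF lam_inv_range(2) in_Ps] later by simp
  qed
  moreover have "i \<le> n" using qi E_subset by auto
  ultimately have "v < i"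
    using priority_forest_child_less_root[OF priority_forest_Ps[OF in_Ps]] \<open>(p, v) \<in> Q\<close> \<open>p < i\<close>
    unfolding Q_def by blast
  then show False using \<open>i < v\<close> by simp
qed

section \<open>The ordered forest F_C(P)\<close>

abbreviation relabel :: "nat \<Rightarrow> onode" where
  "relabel \<equiv> FC_relabel n E Ps"

abbreviation F\<^sub>C :: "(onode \<times> onode) set" where
  "F\<^sub>C \<equiv> FC n E Ps"

lemma relabel_root: "is_root E v \<Longrightarrow> relabel v = Root (root_index n E v)"
  unfolding FC_relabel_def by simp

lemma relabel_child: "v \<in> snd ` E \<Longrightarrow> relabel v = Lab (lam_inv v)"
  unfolding FC_relabel_def lam_inv_def using is_root_iff by simp

lemma root_index_less:
  assumes "a < b" "is_root E a" "b \<le> n"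
  shows "root_index n E a < root_index n E b"
proof -
  have "{r. r \<le> n \<and> is_root E r \<and> r < a} \<subseteq> {r. r \<le> n \<and> is_root E r \<and> r < b}"
    using assms(1) by (blast intro: less_trans)
  moreover have "a \<in> {r. r \<le> n \<and> is_root E r \<and> r < b} - {r. r \<le> n \<and> is_root E r \<and> r < a}"
    using assms by simp
  ultimately have "{r. r \<le> n \<and> is_root E r \<and> r < a} \<subset> {r. r \<le> n \<and> is_root E r \<and> r < b}"
    by blast
  then show ?thesis unfolding root_index_def by (rule psubset_card_mono[rotated]) simp
qed

lemma inj_on_relabel: "inj_on relabel {0..n}"
proof (rule inj_onI)
  fix a b assume ab: "a \<in> {0..n}" "b \<in> {0..n}" "relabel a = relabel b"
  show "a = b"
  proof (cases "is_root E a"; cases "is_root E b")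
    assume "is_root E a" "is_root E b"
    then show ?thesis using ab relabel_root root_index_less[of a b] root_index_less[of b a]
      by (metis atLeastAtMost_iff linorder_neqE_nat onode.inject(1) less_irrefl)
  next
    assume "\<not> is_root E a" "\<not> is_root E b"
    then show ?thesis using ab relabel_child is_root_iff bij_betw_imp_inj_on[OF bij_betw_lam_inv]
      by (metis inj_onD onode.inject(2))
  qed (use ab relabel_root relabel_child is_root_iff in auto)
qed

lemma card_children: "card (snd ` E) = m"
proof -
  have "inj_on snd E" by (rule inj_onI) (metis E_parent_unique prod.collapse)
  then show ?thesis using card_E card_image by blast
qed

lemma m_le_n: "m \<le> n"
proof -
  have "snd ` E \<subseteq> {1..n}" using children_in_range by blast
  then show ?thesis using card_children card_mono[of "{1..n}"] by fastforce
qed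

lemma card_roots: "card {r. r \<le> n \<and> is_root E r} = Suc n - m"
proof -
  have "{r. r \<le> n \<and> is_root E r} = {0..n} - snd ` E" using is_root_iff by auto
  moreover have "snd ` E \<subseteq> {0..n}" using children_in_range by fastforce
  ultimately show ?thesis using card_children by (simp add: card_Diff_subset finite_subset)
qed

lemma relabel_in_onodes: "a \<le> n \<Longrightarrow> relabel a \<in> onodes m n"
proof (cases "is_root E a")
  case True
  assume "a \<le> n"
  then have "{r. r \<le> n \<and> is_root E r \<and> r < a} \<subset> {r. r \<le> n \<and> is_root E r}" using True by auto
  then have "card {r. r \<le> n \<and> is_root E r \<and> r < a} < card {r. r \<le> n \<and> is_root E r}"
    by (intro psubset_card_mono) auto
  then have "root_index n E a \<le> n - m" unfolding root_index_def card_roots by simp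
  then show ?thesis using relabel_root[OF True] unfolding onodes_def by auto
next
  case False
  then have "a \<in> snd ` E" using is_root_iff by simp
  then show ?thesis using relabel_child jh_inv_child(2) unfolding onodes_def by auto
qed

lemma bij_betw_relabel: "bij_betw relabel {0..n} (onodes m n)"
proof -
  have "card (onodes m n) = Suc n"
  proof -
    have "Root ` {0..n - m} \<inter> Lab ` {1..m} = {}" by auto
    moreover have "card (Root ` {0..n - m}) = Suc (n - m)" "card (Lab ` {1..m}) = m"
      by (simp_all add: card_image inj_on_def)
    ultimately show ?thesis unfolding onodes_def using m_le_n by (simp add: card_Un_disjoint)
  qed
  moreover have "relabel ` {0..n} \<subseteq> onodes m n" using relabel_in_onodes by auto
  ultimately have "relabel ` {0..n} = onodes m n"
    using inj_on_relabel by (intro card_subset_eq) (auto simp: onodes_def card_image)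
  then show ?thesis using inj_on_relabel by (simp add: bij_betw_def)
qed

lemma onodes_obtain_relabel:
  assumes "x \<in> onodes m n"
  obtains a where "a \<le> n" "x = relabel a"
  using assms bij_betw_relabel unfolding bij_betw_def by (metis atLeastAtMost_iff imageE)

lemma FC_iff: "(x, y) \<in> F\<^sub>C \<longleftrightarrow> (\<exists>a b. (a, b) \<in> E \<and> x = relabel a \<and> y = relabel b)"
  unfolding FC_def by blast

lemma ochildren_relabel:
  assumes "a \<le> n"
  shows "ochildren F\<^sub>C (relabel a) = lam_inv ` {v. (a, v) \<in> E}"
proof (intro equalityI subsetI)
  fix j assume "j \<in> ochildren F\<^sub>C (relabel a)"
  then have "(relabel a, Lab j) \<in> F\<^sub>C" by (simp add: ochildren_def)
  then obtain a' b where ab: "(a', b) \<in> E" "relabel a = relabel a'" "Lab j = relabel b"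
    unfolding FC_iff by blast
  have "a' \<le> n" using ab(1) E_subset by auto
  then have "a' = a" using inj_onD[OF inj_on_relabel ab(2)] assms by simp
  moreover have "relabel b = Lab (lam_inv b)" using ab(1) relabel_child by force
  ultimately show "j \<in> lam_inv ` {v. (a, v) \<in> E}" using ab by auto
next
  fix j assume "j \<in> lam_inv ` {v. (a, v) \<in> E}"
  then obtain v where v: "(a, v) \<in> E" "j = lam_inv v" by blast
  then have "relabel v = Lab j" using relabel_child by force
  then have "(relabel a, Lab j) \<in> F\<^sub>C" unfolding FC_iff using v(1) by metis
  then show "j \<in> ochildren F\<^sub>C (relabel a)" by (simp add: ochildren_def)
qed

definition pending :: "nat \<Rightarrow> nat set" where
  "pending i = {v. \<exists>p \<le> i. (p, v) \<in> E \<and> i < v}"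

lemma pending_Suc: "pending (Suc i) = pending i - {Suc i} \<union> {v. (Suc i, v) \<in> E}"
  unfolding pending_def using E_less by (auto simp: le_Suc_eq)

definition tree_index :: "nat \<Rightarrow> nat" where
  "tree_index i = card {r. r \<le> i \<and> is_root E r} - 1"

lemma tree_index_Suc:
  "tree_index (Suc i) = (if is_root E (Suc i) then Suc (tree_index i) else tree_index i)"
proof (cases "is_root E (Suc i)")
  case True
  have "0 \<in> {r. r \<le> i \<and> is_root E r}" using is_root_0 by simp
  then have "card {r. r \<le> i \<and> is_root E r} > 0" using card_gt_0_iff by fastforce
  moreover have "{r. r \<le> Suc i \<and> is_root E r} = insert (Suc i) {r. r \<le> i \<and> is_root E r}"
    using True by (auto simp: le_Suc_eq)
  ultimately show ?thesis using True unfolding tree_index_def by simp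
next
  case False
  then have "{r. r \<le> Suc i \<and> is_root E r} = {r. r \<le> i \<and> is_root E r}"
    by (auto simp: le_Suc_eq)
  then show ?thesis using False unfolding tree_index_def by simp
qed

lemma relabel_root_tree_index: "is_root E v \<Longrightarrow> v \<le> n \<Longrightarrow> relabel v = Root (tree_index v)"
proof -
  assume v: "is_root E v" "v \<le> n"
  have "{r. r \<le> v \<and> is_root E r} = insert v {r. r \<le> n \<and> is_root E r \<and> r < v}"
    using v by auto
  then have "tree_index v = root_index n E v" unfolding tree_index_def root_index_def by simp
  then show ?thesis using relabel_root[OF v(1)] by simp
qed

lemma pending_before_root: "is_root E (Suc i) \<Longrightarrow> Suc i \<le> n \<Longrightarrow> pending i = {}"
  unfolding pending_def using priority_forest_child_less_root[OF priority_forest] by fastforce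

lemma pending_before_child: "Suc i \<in> snd ` E \<Longrightarrow> Suc i \<in> pending i"
proof -
  assume "Suc i \<in> snd ` E"
  then obtain q where "(q, Suc i) \<in> E" by force
  moreover from this have "q \<le> i" using E_less by fastforce
  ultimately show ?thesis unfolding pending_def by blast
qed

lemma pending_subset_children: "pending i \<subseteq> snd ` E"
  unfolding pending_def by force

lemma Min_lam_inv_pending:
  assumes "Suc i \<in> snd ` E"
  shows "Min (lam_inv ` pending i) = lam_inv (Suc i)"
proof (rule Min_eqI)
  show "finite (lam_inv ` pending i)"
    using finite_subset[OF pending_subset_children] finite_E by blast
  show "lam_inv (Suc i) \<in> lam_inv ` pending i" using pending_before_child[OF assms] by blast
next
  fix y assume "y \<in> lam_inv ` pending i"
  then obtain p v where pv: "(p, v) \<in> E" "p \<le> i" "i < v" "y = lam_inv v" unfolding pending_def by blast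
  obtain q where q: "(q, Suc i) \<in> E" using assms by force
  show "lam_inv (Suc i) \<le> y"
  proof (cases "v = Suc i")
    case False
    then have "lam_inv (Suc i) < lam_inv v" using lam_inv_less[OF pv(1) q] pv(2,3) by simp
    then show ?thesis using pv(4) by simp
  qed (use pv(4) in simp)
qed

lemma lam_inv_pending_Suc:
  assumes "Suc i \<le> n"
  shows "lam_inv ` pending (Suc i)
       = lam_inv ` pending i - {lam_inv (Suc i)} \<union> ochildren F\<^sub>C (relabel (Suc i))"
proof -
  have "lam_inv ` (pending i - {Suc i}) = lam_inv ` pending i - {lam_inv (Suc i)}"
  proof (cases "is_root E (Suc i)")
    case True
    then show ?thesis using pending_before_root assms by simp
  next
    case False
    note pending_subset_children
    moreover have "Suc i \<in> snd ` E" using False is_root_iff by simp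
    ultimately show ?thesis
      using inj_on_image_set_diff[OF bij_betw_imp_inj_on[OF bij_betw_lam_inv], of "pending i" "{Suc i}"]
      by auto
  qed
  then show ?thesis using pending_Suc ochildren_relabel[OF assms] by (simp add: image_Un)
qed

lemma ps_state_FC:
  "i \<le> n \<Longrightarrow> (ps_step F\<^sub>C ^^ i) (ps_init F\<^sub>C) = (tree_index i, lam_inv ` pending i, relabel i)"
proof (induction i)
  case 0
  have "{r. r \<le> 0 \<and> is_root E r} = {0}" using is_root_0 by auto
  then have "tree_index 0 = 0" unfolding tree_index_def by simp
  moreover have "relabel 0 = Root 0" using relabel_root_tree_index[OF is_root_0] calculation by simp
  moreover have "pending 0 = {v. (0, v) \<in> E}" unfolding pending_def using E_less by fastforce
  ultimately show ?case using ochildren_relabel[of 0] by simp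
next
  case (Suc i)
  then have IH: "(ps_step F\<^sub>C ^^ Suc i) (ps_init F\<^sub>C)
      = ps_step F\<^sub>C (tree_index i, lam_inv ` pending i, relabel i)"
    by simp
  show ?case
  proof (cases "is_root E (Suc i)")
    case True
    then have "relabel (Suc i) = Root (Suc (tree_index i))"
      using relabel_root_tree_index Suc.prems tree_index_Suc by simp
    then show ?thesis
      using IH True pending_before_root[OF True Suc.prems] lam_inv_pending_Suc[OF Suc.prems] tree_index_Suc
      by simp
  next
    case False
    then have child: "Suc i \<in> snd ` E" using is_root_iff by simp
    then have "relabel (Suc i) = Lab (lam_inv (Suc i))" by (rule relabel_child)
    moreover have "lam_inv ` pending i \<noteq> {}" using pending_before_child[OF child] by blast
    ultimately show ?thesis
      using IH False Min_lam_inv_pending[OF child] lam_inv_pending_Suc[OF Suc.prems] tree_index_Suc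
      by (simp add: Let_def)
  qed
qed

lemma ps_visit_FC: "i \<le> n \<Longrightarrow> ps_visit F\<^sub>C i = relabel i"
  unfolding ps_visit_def using ps_state_FC by simp

lemma FC_parent_unique:
  assumes "j \<in> {1..m}"
  shows "\<exists>!p. (p, Lab j) \<in> F\<^sub>C"
proof -
  obtain v where v: "v \<in> snd ` E" "lam_inv v = j"
    using assms bij_betw_lam_inv by (metis bij_betw_imp_surj_on imageE)
  then obtain q where q: "(q, v) \<in> E" by force
  show ?thesis
  proof (rule ex1I)
    show "(relabel q, Lab j) \<in> F\<^sub>C" using q v relabel_child FC_iff by metis
  next
    fix p assume "(p, Lab j) \<in> F\<^sub>C"
    then obtain a b where ab: "(a, b) \<in> E" "p = relabel a" "Lab j = relabel b" unfolding FC_iff by blast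
    then have "b \<in> snd ` E" by force
    then have "lam_inv b = lam_inv v" using ab(3) relabel_child v by simp
    then have "b = v"
      using \<open>b \<in> snd ` E\<close> v(1) bij_betw_imp_inj_on[OF bij_betw_lam_inv] by (auto dest: inj_onD)
    then have "a = q" using ab(1) q E_parent_unique by simp
    then show "p = relabel q" using ab(2) by simp
  qed
qed

lemma FC_trancl: "(a, b) \<in> E\<^sup>+ \<Longrightarrow> (relabel a, relabel b) \<in> F\<^sub>C\<^sup>+"
proof (induction rule: trancl_induct)
  case (base y)
  then show ?case using FC_iff by blast
next
  case (step y z)
  then have "(relabel y, relabel z) \<in> F\<^sub>C" using FC_iff by blast
  with step.IH show ?case by (rule trancl_into_trancl)
qed

lemma FC_reachable_from_Root:
  assumes "j \<in> {1..m}"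
  shows "\<exists>k. (Root k, Lab j) \<in> F\<^sub>C\<^sup>+"
proof -
  obtain v where v: "v \<in> snd ` E" "lam_inv v = j"
    using assms bij_betw_lam_inv by (metis bij_betw_imp_surj_on imageE)
  obtain r where r: "is_root E r" "(r, v) \<in> E\<^sup>*" using increasing_obtain_root[OF E_increasing] .
  have "r \<noteq> v" using r(1) v(1) is_root_iff by blast
  then have "(relabel r, relabel v) \<in> F\<^sub>C\<^sup>+" using r(2) FC_trancl by (meson rtranclD)
  then show ?thesis using relabel_root[OF r(1)] relabel_child[OF v(1)] v(2) by auto
qed

lemma FC_edge_cases:
  assumes "x \<in> F\<^sub>C"
  obtains a b where "(a, b) \<in> E" "a \<le> n" "b \<in> snd ` E" "x = (relabel a, Lab (lam_inv b))"
proof -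
  obtain a b where ab: "(a, b) \<in> E" "x = (relabel a, relabel b)" using assms unfolding FC_def by blast
  then have "a \<le> n" "b \<in> snd ` E" using E_subset by force+
  then show ?thesis using that ab relabel_child by simp
qed

lemma ordered_forest_FC: "ordered_forest m n F\<^sub>C"
  unfolding ordered_forest_def
proof (intro conjI ballI)
  show "m \<le> n" by (rule m_le_n)
  show "F\<^sub>C \<subseteq> onodes m n \<times> onodes m n"
  proof
    fix x assume "x \<in> F\<^sub>C"
    then show "x \<in> onodes m n \<times> onodes m n"
      by (rule FC_edge_cases) (use relabel_in_onodes jh_inv_child(2) in \<open>auto simp: onodes_def\<close>)
  qed
  show "case x of (p, c) \<Rightarrow> \<exists>j. c = Lab j" if "x \<in> F\<^sub>C" for x
    using that by (rule FC_edge_cases) simp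
  show "\<exists>!p. (p, Lab j) \<in> F\<^sub>C" if "j \<in> {1..m}" for j
    using that by (rule FC_parent_unique)
  show "\<exists>k. (Root k, Lab j) \<in> F\<^sub>C\<^sup>+" if "j \<in> {1..m}" for j
    using that by (rule FC_reachable_from_Root)
qed

lemma prio_trav_FC: "prio_trav n F\<^sub>C = jh_inv n Ps"
proof
  fix i
  show "prio_trav n F\<^sub>C i = jh_inv n Ps i"
  proof (cases "i \<in> {1..n}")
    case True
    then show ?thesis
      using ps_visit_FC[of i] relabel_child relabel_root is_root_iff jh_inv_child(1) jh_inv_root
      unfolding prio_trav_def by (cases "is_root E i") auto
  next
    case False
    then show ?thesis unfolding prio_trav_def jh_inv_def by auto
  qed
qed

lemma visit_step_FC:
  assumes "a \<le> n"
  shows "visit_step n F\<^sub>C (relabel a) = a"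
  unfolding visit_step_def
proof (rule the_equality)
  show "a \<le> n \<and> ps_visit F\<^sub>C a = relabel a" using ps_visit_FC assms by simp
next
  fix i assume i: "i \<le> n \<and> ps_visit F\<^sub>C i = relabel a"
  then have "ps_visit F\<^sub>C i = relabel i" by (intro ps_visit_FC) simp
  with i have "relabel i = relabel a" by simp
  moreover have "i \<in> {0..n}" "a \<in> {0..n}" using i assms by simp_all
  ultimately show "i = a" by (rule inj_onD[OF inj_on_relabel])
qed

lemma prio_forest_of_FC: "prio_forest_of n F\<^sub>C = E"
proof -
  have relabelled: "prio_forest_of n F\<^sub>C
      = {(visit_step n F\<^sub>C (relabel a), visit_step n F\<^sub>C (relabel b)) | a b. (a, b) \<in> E}"
    unfolding prio_forest_of_def FC_def by blast
  have visit_steps: "(visit_step n F\<^sub>C (relabel a), visit_step n F\<^sub>C (relabel b)) = (a, b)"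
    if "(a, b) \<in> E" for a b
    using that E_subset visit_step_FC by auto
  show ?thesis
  proof (intro equalityI subsetI)
    fix x assume "x \<in> prio_forest_of n F\<^sub>C"
    then obtain a b where "(a, b) \<in> E" "x = (visit_step n F\<^sub>C (relabel a), visit_step n F\<^sub>C (relabel b))"
      unfolding relabelled by blast
    then show "x \<in> E" using visit_steps by simp
  next
    fix x assume "x \<in> E"
    then obtain a b where ab: "(a, b) \<in> E" and "x = (a, b)" by (cases x) simp
    then have "x = (visit_step n F\<^sub>C (relabel a), visit_step n F\<^sub>C (relabel b))"
      using visit_steps[OF ab] by simp
    with ab show "x \<in> prio_forest_of n F\<^sub>C" unfolding relabelled by blast
  qed
qed

lemma FC_unique:
  assumes "ordered_forest m n F" "prio_trav n F = jh_inv n Ps" "prio_forest_of n F = E"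
  shows "F = F\<^sub>C"
proof -
  have visit_step_F: "visit_step n F (relabel a) = a" if "a \<le> n" for a
    using visit_step_FC[OF that] visit_step_eq_if_prio_trav_eq assms(2) prio_trav_FC by metis
  have E_iff: "(a, b) \<in> E
      \<longleftrightarrow> (\<exists>p c. (p, c) \<in> F \<and> a = visit_step n F p \<and> b = visit_step n F c)"
    for a b using assms(3) unfolding prio_forest_of_def by blast
  have F_relabelled: "\<exists>a b. a \<le> n \<and> b \<le> n \<and> x = (relabel a, relabel b)" if x: "x \<in> F" for x
  proof -
    obtain p c where "x = (p, c)" "p \<in> onodes m n" "c \<in> onodes m n"
      using x assms(1) unfolding ordered_forest_def by blast
    then show ?thesis by (metis onodes_obtain_relabel)
  qed
  show ?thesis
  proof (intro equalityI subsetI)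
    fix x assume x: "x \<in> F"
    then obtain a b where ab: "a \<le> n" "b \<le> n" "x = (relabel a, relabel b)"
      using F_relabelled by blast
    then have "(a, b) \<in> E"
      unfolding E_iff using x visit_step_F by metis
    then show "x \<in> F\<^sub>C" using ab(3) FC_iff by blast
  next
    fix x assume "x \<in> F\<^sub>C"
    then obtain a b where ab: "(a, b) \<in> E" "x = (relabel a, relabel b)" unfolding FC_def by blast
    then obtain p c where pc: "(p, c) \<in> F" "a = visit_step n F p" "b = visit_step n F c"
      unfolding E_iff by blast
    obtain a' b' where ab': "a' \<le> n" "b' \<le> n" "(p, c) = (relabel a', relabel b')"
      using F_relabelled[OF pc(1)] by blast
    then have "a = a'" "b = b'" using pc(2,3) visit_step_F by simp_all
    then show "x \<in> F" using pc(1) ab(2) ab'(3) by simp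
  qed
qed

end

theorem lemma3p2:
  fixes n m :: nat and E :: "(nat \<times> nat) set" and Ps :: "(nat \<times> nat) set list"
  assumes "priority_forest n E"
    and "card E = m"
    and "max_chain n E Ps"
  shows "ordered_forest m n (FC n E Ps)
       \<and> prio_trav n (FC n E Ps) = jh_inv n Ps
       \<and> prio_forest_of n (FC n E Ps) = E
       \<and> (\<forall>F. ordered_forest m n F \<and> prio_trav n F = jh_inv n Ps \<and> prio_forest_of n F = E
              \<longrightarrow> F = FC n E Ps)"
proof -
  interpret priority_chain n m E Ps
    using assms by unfold_locales
  show ?thesis
    using ordered_forest_FC prio_trav_FC prio_forest_of_FC FC_unique by blast
qed

end
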